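(* Let $\beta\in[0,1)$. If $\lambda$ is an eigenvalue of $\Delta_\beta$, then $\lambda>0$.
   Context: Tree: for an integer $m\ge2$, $\mathbb{T}_m$ has vertices the root $\emptyset$ and all finite sequences $(\emptyset,a_1,\dots,a_k)$, $a_i\in\{0,\dots,m-1\}$; $|x|$ is the level, successors of $x$ are $(x,i)$, $\hat x$ is the immediate predecessor of $x\ne\emptyset$. A branch is an infinite sequence $(x_n)_{n\ge0}$ with $x_0=\emptyset$, $x_{n+1}$ a successor of $x_n$; $\partial\mathbb{T}_m$ is the set of branches; $\lim_{x\to y}u(x)=\lim_n u(x_n)$ for $y=(x_n)$. Operator: $p_\beta=1$ if $\beta=0$, $p_\beta=\beta/(1-\beta)$ if $\beta\in(0,1)$. $\Delta_\beta u(\emptyset)=\frac1m\sum_{i=0}^{m-1}u(\emptyset,i)-u(\emptyset)$ and, for $x\ne\emptyset$, $\Delta_\beta u(x)=\big(\beta u(\hat x)+\frac{1-\beta}{m}\sum_{i=0}^{m-1}u(x,i)-u(x)\big)p_\beta^{-|x|}$. Eigenvalues: $\lambda\in\mathbb{R}$ is an eigenvalue of $\Delta_\beta$ if there is a bounded $u:\mathbb{T}_m\to\mathbb{R}$, $u\not\equiv0$, with $-\Delta_\beta u=\lambda u$ on $\mathbb{T}_m$ and $\lim_{x\to y}u(x)=0$ for every $y\in\partial\mathbb{T}_m$. *)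

theory Defs
  imports Complex_Main
begin

text \<open>Vertices of the m-ary tree: the vertex (root, a_1, ..., a_k) is the list [a_1,...,a_k];
  the root is [], the successor (x,i) is x @ [i], the predecessor is butlast x,
  the level |x| is length x.\<close>

definition tree_verts :: "nat \<Rightarrow> nat list set" where
  "tree_verts m = {xs. \<forall>a\<in>set xs. a < m}"

definition pbeta :: "real \<Rightarrow> real" where
  "pbeta \<beta> = (if \<beta> = 0 then 1 else \<beta> / (1 - \<beta>))"

definition Delta_beta :: "nat \<Rightarrow> real \<Rightarrow> (nat list \<Rightarrow> real) \<Rightarrow> nat list \<Rightarrow> real" where
  "Delta_beta m \<beta> u x =
     (if x = [] then (\<Sum>i<m. u [i]) / real m - u []
      else (\<beta> * u (butlast x) + (1 - \<beta>) / real m * (\<Sum>i<m. u (x @ [i])) - u x)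
           * inverse (pbeta \<beta>) ^ length x)"

text \<open>A branch is determined by a sequence y with y n < m; its n-th vertex is [y 0, ..., y (n-1)].\<close>

definition is_eigenvalue :: "nat \<Rightarrow> real \<Rightarrow> real \<Rightarrow> bool" where
  "is_eigenvalue m \<beta> lam \<longleftrightarrow>
     (\<exists>u :: nat list \<Rightarrow> real.
        (\<exists>B. \<forall>x\<in>tree_verts m. \<bar>u x\<bar> \<le> B) \<and>
        (\<exists>x\<in>tree_verts m. u x \<noteq> 0) \<and>
        (\<forall>x\<in>tree_verts m. - Delta_beta m \<beta> u x = lam * u x) \<and>
        (\<forall>y :: nat \<Rightarrow> nat. (\<forall>n. y n < m) \<longrightarrow> (\<lambda>n. u (map y [0..<n])) \<longlonglongrightarrow> 0))"

end

theory Submission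
  imports Defs
begin

text \<open>A maximum-principle argument. Suppose \<open>\<lambda> \<le> 0\<close> and the eigenfunction \<open>u\<close> is
  positive somewhere, say \<open>u x\<^sub>0 = c > 0\<close>. At a vertex \<open>x\<close> with \<open>u x \<ge> c\<close> and
  \<open>u (parent x) \<le> u x\<close> we have \<open>\<Delta>\<^sub>\<beta> u x = -\<lambda> u x \<ge> 0\<close>, and since \<open>\<Delta>\<^sub>\<beta> u x\<close> is a
  positive multiple of a weighted average of \<open>u\<close> over the neighbours minus \<open>u x\<close>, some child
  satisfies \<open>u (x,i) \<ge> u x\<close>. Starting at the shortest ancestor of \<open>x\<^sub>0\<close> where \<open>u \<ge> c\<close>
  and climbing this way produces a branch along which \<open>u\<close> stays \<open>\<ge> c\<close>, contradicting the
  boundary condition. Applying this to \<open>-u\<close> as well forces \<open>u = 0\<close>.\<close>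

lemma pbeta_pos: "0 \<le> \<beta> \<Longrightarrow> \<beta> < 1 \<Longrightarrow> pbeta \<beta> > 0"
  by (auto simp: pbeta_def)

lemma Delta_beta_uminus: "Delta_beta m \<beta> (\<lambda>x. - u x) x = - Delta_beta m \<beta> u x"
  by (simp add: Delta_beta_def sum_negf algebra_simps)

lemma Delta_beta_neg_if_children_below:
  fixes u :: "nat list \<Rightarrow> real"
  assumes "m > 0" "0 \<le> \<beta>" "\<beta> < 1"
    and parent: "x = [] \<or> u (butlast x) \<le> u x"
    and children: "\<And>i. i < m \<Longrightarrow> u (x @ [i]) < u x"
  shows "Delta_beta m \<beta> u x < 0"
proof -
  have "(\<Sum>i<m. u (x @ [i])) < (\<Sum>i<m. u x)"
    using \<open>m > 0\<close> children by (intro sum_strict_mono) auto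
  then have avg: "(\<Sum>i<m. u (x @ [i])) / real m < u x"
    using \<open>m > 0\<close> by (simp add: divide_simps mult.commute)
  show ?thesis
  proof (cases "x = []")
    case True
    then show ?thesis using avg by (simp add: Delta_beta_def)
  next
    case False
    have "(1 - \<beta>) * ((\<Sum>i<m. u (x @ [i])) / real m) < (1 - \<beta>) * u x"
      using avg \<open>\<beta> < 1\<close> by (intro mult_strict_left_mono) auto
    moreover have "\<beta> * u (butlast x) \<le> \<beta> * u x"
      using False parent \<open>0 \<le> \<beta>\<close> by (simp add: mult_left_mono)
    ultimately have "\<beta> * u (butlast x) + (1 - \<beta>) / real m * (\<Sum>i<m. u (x @ [i])) - u x < 0"
      by (simp add: algebra_simps)
    moreover have "inverse (pbeta \<beta>) ^ length x > 0"
      using pbeta_pos[OF \<open>0 \<le> \<beta>\<close> \<open>\<beta> < 1\<close>] by simp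
    ultimately show ?thesis
      using False by (simp add: Delta_beta_def mult_neg_pos)
  qed
qed

lemma ex_shortest_prefix_ge:
  fixes u :: "'a list \<Rightarrow> real"
  assumes "c \<le> u xs"
  shows "\<exists>k\<le>length xs. c \<le> u (take k xs) \<and> (k = 0 \<or> u (take (k - 1) xs) < c)"
proof -
  obtain k where "k \<le> length xs" "\<forall>i<k. \<not> c \<le> u (take i xs)" "c \<le> u (take k xs)"
    using ex_least_nat_le[of "\<lambda>k. c \<le> u (take k xs)" "length xs"] assms by auto
  moreover have "k = 0 \<or> u (take (k - 1) xs) < c"
    using \<open>\<forall>i<k. \<not> c \<le> u (take i xs)\<close> by (cases k) (auto simp: not_le)
  ultimately show ?thesis by blast
qed

lemma ex_branch_through:
  assumes "xs \<in> tree_verts m" "P xs"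
    and step: "\<And>x. P x \<Longrightarrow> \<exists>i<m. P (x @ [i])"
  shows "\<exists>y. (\<forall>n. y n < m) \<and> (\<forall>n\<ge>length xs. P (map y [0..<n]))"
proof -
  define child where "child x = (SOME i. i < m \<and> P (x @ [i]))" for x
  have child: "child x < m \<and> P (x @ [child x])" if "P x" for x
    unfolding child_def using step[OF that] by (rule someI_ex)
  define path where "path = rec_nat xs (\<lambda>_ x. x @ [child x])"
  define z where "z j = child (path j)" for j
  have path_0: "path 0 = xs" and path_Suc: "path (Suc k) = path k @ [z k]" for k
    by (simp_all add: path_def z_def)
  have path_P: "P (path k)" for k
    by (induction k) (use assms(2) child in \<open>auto simp: path_0 path_Suc z_def\<close>)
  have path_eq: "path k = xs @ map z [0..<k]" for k
    by (induction k) (simp_all add: path_0 path_Suc)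
  define y where "y n = (if n < length xs then xs ! n else z (n - length xs))" for n
  have "y n < m" for n
    using assms(1) child[OF path_P] by (auto simp: y_def z_def tree_verts_def)
  moreover have "P (map y [0..<n])" if "n \<ge> length xs" for n
  proof -
    have "map y [0..<n] = path (n - length xs)"
      using that by (intro nth_equalityI) (auto simp: path_eq y_def nth_append)
    then show ?thesis using path_P by simp
  qed
  ultimately show ?thesis by blast
qed

lemma eigenfunction_nonpos:
  fixes u :: "nat list \<Rightarrow> real"
  assumes "m > 0" "0 \<le> \<beta>" "\<beta> < 1" "lam \<le> 0"
    and eigen: "\<forall>x\<in>tree_verts m. - Delta_beta m \<beta> u x = lam * u x"
    and boundary: "\<forall>y :: nat \<Rightarrow> nat. (\<forall>n. y n < m) \<longrightarrow> (\<lambda>n. u (map y [0..<n])) \<longlonglongrightarrow> 0"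
    and "x0 \<in> tree_verts m"
  shows "u x0 \<le> 0"
proof (rule ccontr)
  assume "\<not> u x0 \<le> 0"
  define c where "c = u x0"
  have "c > 0" using \<open>\<not> u x0 \<le> 0\<close> by (simp add: c_def)
  define climbing where
    "climbing x \<longleftrightarrow> x \<in> tree_verts m \<and> c \<le> u x \<and> (x = [] \<or> u (butlast x) \<le> u x)" for x
  have climb_step: "\<exists>i<m. climbing (x @ [i])" if x: "climbing x" for x
  proof -
    have "lam * u x \<le> 0"
      using x \<open>lam \<le> 0\<close> \<open>c > 0\<close> by (auto simp: climbing_def intro!: mult_nonpos_nonneg)
    then have "\<not> Delta_beta m \<beta> u x < 0"
      using eigen x by (auto simp: climbing_def)
    then obtain i where "i < m" "u x \<le> u (x @ [i])"
      using Delta_beta_neg_if_children_below[of m \<beta> x u] assms(1-3) x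
      by (force simp: climbing_def not_le)
    then show ?thesis
      using x by (intro exI[of _ i]) (auto simp: climbing_def tree_verts_def)
  qed
  obtain k where k: "k \<le> length x0" "c \<le> u (take k x0)" "k = 0 \<or> u (take (k - 1) x0) < c"
    using ex_shortest_prefix_ge[of c u x0] by (auto simp: c_def)
  have "climbing (take k x0)"
    using k \<open>x0 \<in> tree_verts m\<close>
    by (auto simp: climbing_def butlast_take tree_verts_def dest: in_set_takeD)
  then obtain y where y: "\<forall>n. y n < m" "\<forall>n\<ge>k. climbing (map y [0..<n])"
    using ex_branch_through[of "take k x0" m climbing] climb_step \<open>k \<le> length x0\<close>
      \<open>x0 \<in> tree_verts m\<close> by (auto simp: climbing_def min_absorb2)
  have "eventually (\<lambda>n. u (map y [0..<n]) < c) sequentially"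
    using boundary y(1) \<open>c > 0\<close> by (intro order_tendstoD(2)) auto
  then obtain N where "\<forall>n\<ge>N. u (map y [0..<n]) < c"
    by (auto simp: eventually_sequentially)
  then have "u (map y [0..<max N k]) < c" by simp
  moreover have "c \<le> u (map y [0..<max N k])"
    using y(2) by (simp add: climbing_def)
  ultimately show False by simp
qed

theorem lemma3p1:
  fixes m :: nat and \<beta> lam :: real
  assumes "m \<ge> 2" and "0 \<le> \<beta>" and "\<beta> < 1"
    and "is_eigenvalue m \<beta> lam"
  shows "lam > 0"
proof (rule ccontr)
  assume "\<not> lam > 0"
  then have "lam \<le> 0" by simp
  have "m > 0" using \<open>m \<ge> 2\<close> by simp
  obtain u x0 where "x0 \<in> tree_verts m" "u x0 \<noteq> 0"
    and eigen: "\<forall>x\<in>tree_verts m. - Delta_beta m \<beta> u x = lam * u x"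
    and boundary: "\<forall>y :: nat \<Rightarrow> nat. (\<forall>n. y n < m) \<longrightarrow> (\<lambda>n. u (map y [0..<n])) \<longlonglongrightarrow> 0"
    using assms(4) unfolding is_eigenvalue_def by blast
  have "u x0 \<le> 0"
    using eigenfunction_nonpos[OF \<open>m > 0\<close> assms(2,3) \<open>lam \<le> 0\<close> eigen boundary \<open>x0 \<in> tree_verts m\<close>] .
  moreover have "- u x0 \<le> 0"
  proof (rule eigenfunction_nonpos[OF \<open>m > 0\<close> assms(2,3) \<open>lam \<le> 0\<close>])
    show "\<forall>x\<in>tree_verts m. - Delta_beta m \<beta> (\<lambda>x. - u x) x = lam * - u x"
      using eigen by (simp add: Delta_beta_uminus)
    show "\<forall>y :: nat \<Rightarrow> nat. (\<forall>n. y n < m) \<longrightarrow> (\<lambda>n. - u (map y [0..<n])) \<longlonglongrightarrow> 0"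
      using boundary tendsto_minus by fastforce
  qed fact
  ultimately show False using \<open>u x0 \<noteq> 0\<close> by simp
qed

end
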